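(* Consider the private bug bounty model described in the context, with given prizes $\boldsymbol v=(v^1,\dots,v^L)$, artificial-bug prizes $\boldsymbol v_a=(v_a^1,\dots,v_a^K)$ and artificial-bug complexities $\boldsymbol q_a=(q_a^1,\dots,q_a^K)$. Let $c^*$ denote the symmetric equilibrium threshold. If $\Psi(\underline c)\le \underline c$, then $c^*=\underline c$. If $\Psi(\overline c)\ge\overline c$, then $c^*=\overline c$. Otherwise, the symmetric equilibrium threshold $c^*=c^*(\boldsymbol v,\boldsymbol v_a,\boldsymbol q_a)$ is the unique solution $\hat c$ of $$\hat c=\Psi(\hat c;\boldsymbol v,\boldsymbol v_a,\boldsymbol q_a).$$
   Context: Private bug bounty model. There are $L$ potential organic bugs $l=1,\dots,L$; bug $l$ exists with probability $\mu^l\in(0,1]$, independently across bugs, and has complexity $q^l\in(0,1]$. There are $n$ risk-neutral agents. Agent $i$ has a private search cost $c_i$, drawn i.i.d. across agents from a distribution $F$ with support $[\underline c,\overline c]$, where $-\infty\le\underline c<\overline c\le\infty$ and $\overline c>0$; $F$ is continuous, has full support, has a finite density $f$, and $F/f$ is non-decreasing. The designer sets prizes $v^l\ge0$ for the organic bugs and inserts $K$ artificial bugs (which exist with certainty) with prizes $v_a^k\ge0$ and complexities $q_a^k\in[0,1]$. Each agent chooses whether to search, paying $c_i$ if so. A searching agent finds each existing bug of complexity $q$ with probability $q$, independently across agents and bugs; the prize of each found bug is paid to one of the agents who found it, chosen uniformly at random. For a threshold $\hat c$, $\Phi(\hat c;q)$ denotes the probability that a searching agent wins the prize of an existing bug of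 complexity $q$ when each of the other $n-1$ agents searches if and only if his/her cost is at most $\hat c$. Define $\Psi(\hat c;\boldsymbol v,\boldsymbol v_a,\boldsymbol q_a)=\sum_l v^l\mu^l\Phi(\hat c;q^l)+\sum_k v_a^k\Phi(\hat c;q_a^k)$ (written $\Psi(\hat c)$ when the prizes are fixed). A threshold strategy $\hat c$ means: search if and only if own cost is at most $\hat c$. The symmetric equilibrium threshold is the common threshold used by all agents in a symmetric Bayes–Nash equilibrium. *)

theory Defs
  imports "HOL-Analysis.Analysis" "HOL-Library.Extended_Real"
begin

definition cost_support :: "ereal \<Rightarrow> ereal \<Rightarrow> real set" where
  "cost_support cl cu = {c. cl \<le> ereal c \<and> ereal c \<le> cu}"

definition admissible_cost_dist ::
  "ereal \<Rightarrow> ereal \<Rightarrow> (real \<Rightarrow> real) \<Rightarrow> (real \<Rightarrow> real) \<Rightarrow> bool" where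
  "admissible_cost_dist cl cu F f \<longleftrightarrow>
     cl < cu \<and> 0 < cu \<and>
     mono F \<and> continuous_on UNIV F \<and>
     (F \<longlongrightarrow> 0) at_bot \<and> (F \<longlongrightarrow> 1) at_top \<and>
     (\<forall>c. ereal c \<le> cl \<longrightarrow> F c = 0) \<and>
     (\<forall>c. cu \<le> ereal c \<longrightarrow> F c = 1) \<and>
     strict_mono_on (cost_support cl cu) F \<and>
     (\<forall>c. cl < ereal c \<and> ereal c < cu \<longrightarrow> (F has_real_derivative f c) (at c)) \<and>
     mono_on {c. cl < ereal c \<and> ereal c < cu} (\<lambda>c. F c / f c)"

text \<open>Phi n F q ch: probability that a searching agent wins the prize of an existing bug of
  complexity q when each of the other n-1 agents searches iff his cost is at most ch.
  The agent finds the bug with probability q; each other agent independently finds it with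
  probability p = q * F ch; the prize goes uniformly to one of the finders.\<close>
definition Phi :: "nat \<Rightarrow> (real \<Rightarrow> real) \<Rightarrow> real \<Rightarrow> real \<Rightarrow> real" where
  "Phi n F q ch =
     (let p = q * F ch in
      q * (\<Sum>k\<in>{0..n-1}. real ((n-1) choose k) * p ^ k * (1 - p) ^ (n - 1 - k) / real (k + 1)))"

definition Psi :: "nat \<Rightarrow> (real \<Rightarrow> real) \<Rightarrow> nat \<Rightarrow> (nat \<Rightarrow> real) \<Rightarrow> (nat \<Rightarrow> real) \<Rightarrow>
    (nat \<Rightarrow> real) \<Rightarrow> nat \<Rightarrow> (nat \<Rightarrow> real) \<Rightarrow> (nat \<Rightarrow> real) \<Rightarrow> real \<Rightarrow> real" where
  "Psi n F L mu q v K va qa ch =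
     (\<Sum>l<L. v l * mu l * Phi n F (q l) ch) + (\<Sum>k<K. va k * Phi n F (qa k) ch)"

text \<open>ch is a symmetric (Bayes-Nash) equilibrium threshold: when all other agents use
  threshold ch, a searching agent of cost c gets expected payoff Psi ch - c (not searching
  gives 0); searching iff cost \<le> ch must be a best response for every cost type in the
  support (up to the single, null, type c = ch).\<close>
definition sym_eq_threshold :: "ereal \<Rightarrow> ereal \<Rightarrow> (real \<Rightarrow> real) \<Rightarrow> real \<Rightarrow> bool" where
  "sym_eq_threshold cl cu Psi_fun ch \<longleftrightarrow>
     ch \<in> cost_support cl cu \<and>
     (\<forall>c\<in>cost_support cl cu. c < ch \<longrightarrow> 0 \<le> Psi_fun ch - c) \<and>
     (\<forall>c\<in>cost_support cl cu. ch < c \<longrightarrow> Psi_fun ch - c \<le> 0)"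

end

theory Submission
  imports Defs
begin

text \<open>Phi is the expected prize share q E[1/(1+X)] with X binomial with parameters n-1 and
  p = q F c; summing the binomial series gives the closed form q (1 - (1-p)^n) / (n p), so Phi
  and hence Psi are continuous, bounded and non-increasing in the threshold. In an
  equilibrium, every cost type strictly between Psi c and c would deviate, so Psi c = c unless
  c is the end point of the support on the side towards Psi c. As c - Psi c is strictly
  increasing, a corner inequality at an end point pins the equilibrium there; otherwise
  c - Psi c changes sign on the support and the intermediate value theorem yields exactly one
  fixed point.\<close>

lemma sum_binomial_div_Suc_mult:
  fixes p :: real
  shows "p * real (Suc m) * (\<Sum>k\<in>{0..m}. real (m choose k) * p^k * (1-p)^(m-k) / real (k+1))
         = 1 - (1-p)^(Suc m)"
proof -
  have term_eq: "p * real (Suc m) * (real (m choose k) * p^k * (1-p)^(m-k) / real (k+1))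
      = real (Suc m choose Suc k) * p^(Suc k) * (1-p)^(Suc m - Suc k)" for k
  proof -
    have "real (Suc m) * real (m choose k) = real (Suc m choose Suc k) * real (Suc k)"
      by (metis Suc_times_binomial_eq of_nat_mult)
    then have choose_eq: "real (Suc m) * real (m choose k) / real (Suc k) = real (Suc m choose Suc k)"
      by (simp add: divide_eq_eq del: of_nat_Suc)
    have "p * real (Suc m) * (real (m choose k) * p^k * (1-p)^(m-k) / real (k+1))
       = (real (Suc m) * real (m choose k) / real (Suc k)) * p^(Suc k) * (1-p)^(m-k)"
      by (simp only: power_Suc times_divide_eq_right times_divide_eq_left mult_ac
          Suc_eq_plus1 power_add power_one_right)
    then show ?thesis by (simp only: choose_eq diff_Suc_Suc)
  qed
  have "p * real (Suc m) * (\<Sum>k\<in>{0..m}. real (m choose k) * p^k * (1-p)^(m-k) / real (k+1))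
     = (\<Sum>k\<le>m. real (Suc m choose Suc k) * p^(Suc k) * (1-p)^(Suc m - Suc k))"
    unfolding sum_distrib_left atLeast0AtMost by (rule sum.cong[OF refl term_eq])
  also have "\<dots> = (\<Sum>k\<le>Suc m. real (Suc m choose k) * p^k * (1-p)^(Suc m - k)) - (1-p)^(Suc m)"
    by (subst sum.atMost_Suc_shift) simp
  also have "(\<Sum>k\<le>Suc m. real (Suc m choose k) * p^k * (1-p)^(Suc m - k)) = (p + (1-p))^(Suc m)"
    by (rule binomial_ring[symmetric])
  finally show ?thesis by simp
qed

lemma sum_binomial_div_Suc_eq_geometric:
  fixes p :: real
  shows "(\<Sum>k\<in>{0..m}. real (m choose k) * p^k * (1-p)^(m-k) / real (k+1))
         = (\<Sum>j<Suc m. (1-p)^j) / real (Suc m)"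
proof (cases "p = 0")
  case True
  have "(\<Sum>k\<in>{0..m}. real (m choose k) * p^k * (1-p)^(m-k) / real (k+1))
     = (\<Sum>k\<in>{0..m}. if k = 0 then 1 else 0)"
    by (rule sum.cong) (auto simp: True)
  then show ?thesis using True by simp
next
  case False
  have geometric: "p * (\<Sum>j<Suc m. (1-p)^j) = 1 - (1-p)^(Suc m)"
    using power_diff_1_eq[of "1-p" "Suc m"] by (simp add: algebra_simps)
  have "p * real (Suc m) * (\<Sum>k\<in>{0..m}. real (m choose k) * p^k * (1-p)^(m-k) / real (k+1))
      = p * real (Suc m) * ((\<Sum>j<Suc m. (1-p)^j) / real (Suc m))"
    using sum_binomial_div_Suc_mult[of p m] geometric by simp
  then have "real (Suc m) * (\<Sum>k\<in>{0..m}. real (m choose k) * p^k * (1-p)^(m-k) / real (k+1))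
      = (\<Sum>j<Suc m. (1-p)^j)"
    using False by (simp del: of_nat_Suc sum.lessThan_Suc)
  then show ?thesis by (simp add: field_simps del: of_nat_Suc sum.lessThan_Suc)
qed

lemma Phi_eq_geometric:
  assumes "1 \<le> n"
  shows "Phi n F q c = q * (\<Sum>j<n. (1 - q * F c)^j) / real n"
proof -
  obtain m where "n = Suc m" using assms by (cases n) auto
  then show ?thesis
    unfolding Phi_def Let_def using sum_binomial_div_Suc_eq_geometric[of m "q * F c"] by simp
qed

lemma Phi_bounds:
  assumes "1 \<le> n" "0 \<le> q" "q \<le> 1" "0 \<le> F c" "F c \<le> 1"
  shows "0 \<le> Phi n F q c \<and> Phi n F q c \<le> q"
proof -
  have p: "0 \<le> 1 - q * F c" "1 - q * F c \<le> 1" using assms by (auto simp: mult_le_one)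
  have "(\<Sum>j<n. (1 - q * F c)^j) \<le> (\<Sum>j<n. 1)"
    by (rule sum_mono) (use p in \<open>auto intro: power_le_one\<close>)
  moreover have "0 \<le> (\<Sum>j<n. (1 - q * F c)^j)" using p by (auto intro: sum_nonneg)
  ultimately show ?thesis unfolding Phi_eq_geometric[OF assms(1)] using assms
    by (auto simp: divide_le_eq mult_left_mono intro!: divide_nonneg_nonneg)
qed

lemma antimono_Phi:
  assumes "1 \<le> n" "0 \<le> q" "q \<le> 1" "mono F" "\<And>c. 0 \<le> F c \<and> F c \<le> 1"
  shows "antimono (Phi n F q)"
proof
  fix x y :: real
  assume "x \<le> y"
  with \<open>mono F\<close> have "F x \<le> F y" by (rule monoD)
  have "(\<Sum>j<n. (1 - q * F y)^j) \<le> (\<Sum>j<n. (1 - q * F x)^j)"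
  proof (rule sum_mono, rule power_mono)
    show "1 - q * F y \<le> 1 - q * F x" using \<open>F x \<le> F y\<close> assms by (simp add: mult_left_mono)
    show "0 \<le> 1 - q * F y" using assms mult_le_one[of q "F y"] by fastforce
  qed
  then show "Phi n F q y \<le> Phi n F q x" unfolding Phi_eq_geometric[OF assms(1)] using assms
    by (simp add: divide_right_mono mult_left_mono)
qed

lemma continuous_on_Phi:
  assumes "continuous_on UNIV F"
  shows "continuous_on UNIV (Phi n F q)"
  unfolding Phi_def[abs_def] Let_def by (intro continuous_intros assms) auto

lemma continuous_on_Psi:
  assumes "continuous_on UNIV F"
  shows "continuous_on UNIV (Psi n F L mu q v K va qa)"
  unfolding Psi_def[abs_def] by (intro continuous_intros continuous_on_Phi assms)

lemma antimono_Psi: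
  assumes "1 \<le> n" "mono F" "\<And>c. 0 \<le> F c \<and> F c \<le> 1"
    and organic: "\<And>l. l < L \<Longrightarrow> 0 \<le> v l * mu l \<and> 0 \<le> q l \<and> q l \<le> 1"
    and artificial: "\<And>k. k < K \<Longrightarrow> 0 \<le> va k \<and> 0 \<le> qa k \<and> qa k \<le> 1"
  shows "antimono (Psi n F L mu q v K va qa)"
proof
  fix x y :: real
  assume "x \<le> y"
  have "antimono (Phi n F (q l))" if "l < L" for l
    using antimono_Phi assms organic[OF that] by blast
  moreover have "antimono (Phi n F (qa k))" if "k < K" for k
    using antimono_Phi assms artificial[OF that] by blast
  ultimately show "Psi n F L mu q v K va qa y \<le> Psi n F L mu q v K va qa x"
    unfolding Psi_def using \<open>x \<le> y\<close> organic artificial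
    by (intro add_mono sum_mono mult_left_mono) (auto dest: antimonoD)
qed

lemma abs_Psi_le:
  assumes "1 \<le> n" "0 \<le> F c" "F c \<le> 1"
    and organic: "\<And>l. l < L \<Longrightarrow> 0 \<le> v l * mu l \<and> 0 \<le> q l \<and> q l \<le> 1"
    and artificial: "\<And>k. k < K \<Longrightarrow> 0 \<le> va k \<and> 0 \<le> qa k \<and> qa k \<le> 1"
  shows "\<bar>Psi n F L mu q v K va qa c\<bar> \<le> (\<Sum>l<L. v l * mu l) + (\<Sum>k<K. va k)"
proof -
  have "0 \<le> v l * mu l * Phi n F (q l) c \<and> v l * mu l * Phi n F (q l) c \<le> v l * mu l"
    if "l < L" for l
    using Phi_bounds[of n "q l" F c] assms organic[OF that] by (auto simp: mult_left_le)
  moreover have "0 \<le> va k * Phi n F (qa k) c \<and> va k * Phi n F (qa k) c \<le> va k"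
    if "k < K" for k
    using Phi_bounds[of n "qa k" F c] assms artificial[OF that] by (auto simp: mult_left_le)
  ultimately have "0 \<le> Psi n F L mu q v K va qa c"
    and "Psi n F L mu q v K va qa c \<le> (\<Sum>l<L. v l * mu l) + (\<Sum>k<K. va k)"
    unfolding Psi_def by (intro add_nonneg_nonneg sum_nonneg add_mono sum_mono; simp)+
  then show ?thesis by simp
qed

lemma mono_bounded_by_limits:
  fixes F :: "real \<Rightarrow> real"
  assumes "mono F" "(F \<longlongrightarrow> a) at_bot" "(F \<longlongrightarrow> b) at_top"
  shows "a \<le> F x \<and> F x \<le> b"
proof
  show "a \<le> F x"
    by (rule tendsto_upperbound[OF assms(2)])
      (auto simp: eventually_at_bot_linorder intro!: exI[of _ x] monoD[OF assms(1)])
  show "F x \<le> b"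
    by (rule tendsto_lowerbound[OF assms(3)])
      (auto simp: eventually_at_top_linorder intro!: exI[of _ x] monoD[OF assms(1)])
qed

lemma fixpoint_imp_sym_eq_threshold:
  assumes "c \<in> cost_support cl cu" "\<Psi> c = c"
  shows "sym_eq_threshold cl cu \<Psi> c"
  using assms unfolding sym_eq_threshold_def by auto

lemma sym_eq_threshold_above_fixpoint:
  assumes eq: "sym_eq_threshold cl cu \<Psi> c" and "\<Psi> c < c"
  shows "cl = ereal c"
proof (rule ccontr)
  assume "cl \<noteq> ereal c"
  with eq have "max cl (ereal (\<Psi> c)) < ereal c"
    using \<open>\<Psi> c < c\<close> unfolding sym_eq_threshold_def cost_support_def by auto
  from ereal_dense2[OF this] obtain r where r: "max cl (ereal (\<Psi> c)) < ereal r" "r < c"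
    by auto
  with eq have "r \<in> cost_support cl cu"
    unfolding sym_eq_threshold_def cost_support_def
    by (auto intro: order_trans[where y = "ereal c"])
  with eq r have "r \<le> \<Psi> c" unfolding sym_eq_threshold_def by auto
  with r show False by simp
qed

lemma sym_eq_threshold_below_fixpoint:
  assumes eq: "sym_eq_threshold cl cu \<Psi> c" and "c < \<Psi> c"
  shows "cu = ereal c"
proof (rule ccontr)
  assume "cu \<noteq> ereal c"
  with eq have "ereal c < min cu (ereal (\<Psi> c))"
    using \<open>c < \<Psi> c\<close> unfolding sym_eq_threshold_def cost_support_def by auto
  from ereal_dense2[OF this] obtain r where r: "ereal r < min cu (ereal (\<Psi> c))" "c < r"
    by auto
  with eq have "r \<in> cost_support cl cu"
    unfolding sym_eq_threshold_def cost_support_def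
    by (auto intro: order_trans[where y = "ereal c"])
  with eq r have "\<Psi> c \<le> r" unfolding sym_eq_threshold_def by auto
  with r show False by simp
qed

lemma sym_eq_threshold_lower_corner:
  assumes "cl < cu" "antimono \<Psi>" "cl = ereal c" "\<Psi> c \<le> c"
  shows "{ch. sym_eq_threshold cl cu \<Psi> ch} = {c}"
proof -
  have "sym_eq_threshold cl cu \<Psi> c"
    using assms unfolding sym_eq_threshold_def cost_support_def by auto
  moreover have "ch = c" if eq: "sym_eq_threshold cl cu \<Psi> ch" for ch
  proof (cases "ch \<le> \<Psi> ch")
    case True
    have "c \<le> ch"
      using eq \<open>cl = ereal c\<close> unfolding sym_eq_threshold_def cost_support_def by simp
    with \<open>antimono \<Psi>\<close> have "\<Psi> ch \<le> \<Psi> c" by (rule antimonoD)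
    with True \<open>c \<le> ch\<close> \<open>\<Psi> c \<le> c\<close> show ?thesis by simp
  next
    case False
    then show ?thesis using sym_eq_threshold_above_fixpoint[OF eq] \<open>cl = ereal c\<close> by simp
  qed
  ultimately show ?thesis by blast
qed

lemma sym_eq_threshold_upper_corner:
  assumes "cl < cu" "antimono \<Psi>" "cu = ereal c" "c \<le> \<Psi> c"
  shows "{ch. sym_eq_threshold cl cu \<Psi> ch} = {c}"
proof -
  have "sym_eq_threshold cl cu \<Psi> c"
    using assms unfolding sym_eq_threshold_def cost_support_def by auto
  moreover have "ch = c" if eq: "sym_eq_threshold cl cu \<Psi> ch" for ch
  proof (cases "\<Psi> ch \<le> ch")
    case True
    have "ch \<le> c"
      using eq \<open>cu = ereal c\<close> unfolding sym_eq_threshold_def cost_support_def by simp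
    with \<open>antimono \<Psi>\<close> have "\<Psi> c \<le> \<Psi> ch" by (rule antimonoD)
    with True \<open>ch \<le> c\<close> \<open>c \<le> \<Psi> c\<close> show ?thesis by simp
  next
    case False
    then show ?thesis using sym_eq_threshold_below_fixpoint[OF eq] \<open>cu = ereal c\<close> by simp
  qed
  ultimately show ?thesis by blast
qed

lemma sym_eq_threshold_iff_fixpoint:
  assumes "\<not> (\<exists>c. cl = ereal c \<and> \<Psi> c \<le> c)" "\<not> (\<exists>c. cu = ereal c \<and> c \<le> \<Psi> c)"
  shows "sym_eq_threshold cl cu \<Psi> ch \<longleftrightarrow> ch \<in> cost_support cl cu \<and> ch = \<Psi> ch"
  using assms sym_eq_threshold_above_fixpoint[of cl cu \<Psi> ch]
    sym_eq_threshold_below_fixpoint[of cl cu \<Psi> ch] fixpoint_imp_sym_eq_threshold[of ch cl cu \<Psi>]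
  unfolding sym_eq_threshold_def by force

lemma antimono_fixpoint_unique:
  fixes \<Psi> :: "'a::linorder \<Rightarrow> 'a"
  assumes "antimono \<Psi>" "\<Psi> x = x" "\<Psi> y = y"
  shows "x = y"
  using assms by (metis antimonoD linorder_linear order_antisym)

lemma antimono_fixpoint_between:
  fixes \<Psi> :: "real \<Rightarrow> real"
  assumes "antimono \<Psi>" "continuous_on UNIV \<Psi>" "a \<le> \<Psi> a" "\<Psi> b \<le> b"
  shows "\<exists>x. a \<le> x \<and> x \<le> b \<and> \<Psi> x = x"
proof -
  have "a \<le> b"
  proof (rule ccontr)
    assume "\<not> a \<le> b"
    then have "\<Psi> a \<le> \<Psi> b" using antimonoD[OF assms(1)] by simp
    with assms(3,4) \<open>\<not> a \<le> b\<close> show False by simp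
  qed
  moreover have "continuous_on {a..b} (\<lambda>x. x - \<Psi> x)"
    using assms(2) by (intro continuous_intros) (auto intro: continuous_on_subset)
  ultimately obtain x where "a \<le> x" "x \<le> b" "x - \<Psi> x = 0"
    using IVT'[of "\<lambda>x. x - \<Psi> x" a 0 b] assms(3,4) by auto
  then show ?thesis by auto
qed

lemma ex_sub_fixpoint_in_support:
  fixes \<Psi> :: "real \<Rightarrow> real"
  assumes "cl < cu" "\<And>x. \<bar>\<Psi> x\<bar> \<le> B" "\<not> (\<exists>c. cl = ereal c \<and> \<Psi> c \<le> c)"
  shows "\<exists>a\<in>cost_support cl cu. a \<le> \<Psi> a"
proof (cases cl)
  case (real c)
  with assms show ?thesis unfolding cost_support_def by force
next
  case MInf
  obtain z where "ereal z < cu" using ereal_dense2[OF \<open>cl < cu\<close>] by blast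
  then have "ereal (min z (- B)) \<le> cu"
    by (metis ereal_less_eq(3) less_imp_le min.cobounded1 order_trans)
  then have "min z (- B) \<in> cost_support cl cu"
    using MInf by (simp add: cost_support_def)
  moreover have "min z (- B) \<le> \<Psi> (min z (- B))" using assms(2)[of "min z (- B)"] by linarith
  ultimately show ?thesis by blast
qed (use assms in simp)

lemma ex_super_fixpoint_in_support:
  fixes \<Psi> :: "real \<Rightarrow> real"
  assumes "cl < cu" "\<And>x. \<bar>\<Psi> x\<bar> \<le> B" "\<not> (\<exists>c. cu = ereal c \<and> c \<le> \<Psi> c)"
  shows "\<exists>b\<in>cost_support cl cu. \<Psi> b \<le> b"
proof (cases cu)
  case (real c)
  with assms show ?thesis unfolding cost_support_def by force
next
  case PInf
  obtain z where "cl < ereal z" using ereal_dense2[OF \<open>cl < cu\<close>] by blast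
  then have "cl \<le> ereal (max z B)"
    by (metis ereal_less_eq(3) less_imp_le max.cobounded1 order_trans)
  then have "max z B \<in> cost_support cl cu"
    using PInf by (simp add: cost_support_def)
  moreover have "\<Psi> (max z B) \<le> max z B" using assms(2)[of "max z B"] by linarith
  ultimately show ?thesis by blast
qed (use assms in simp)

lemma ex1_fixpoint_in_support:
  fixes \<Psi> :: "real \<Rightarrow> real"
  assumes "cl < cu" "antimono \<Psi>" "continuous_on UNIV \<Psi>" "\<And>x. \<bar>\<Psi> x\<bar> \<le> B"
    and "\<not> (\<exists>c. cl = ereal c \<and> \<Psi> c \<le> c)" "\<not> (\<exists>c. cu = ereal c \<and> c \<le> \<Psi> c)"
  shows "\<exists>!ch. ch \<in> cost_support cl cu \<and> ch = \<Psi> ch"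
proof -
  obtain a b where a: "a \<in> cost_support cl cu" "a \<le> \<Psi> a"
    and b: "b \<in> cost_support cl cu" "\<Psi> b \<le> b"
    using ex_sub_fixpoint_in_support[of cl cu \<Psi> B] ex_super_fixpoint_in_support[of cl cu \<Psi> B]
      assms by blast
  obtain x where "a \<le> x" "x \<le> b" "\<Psi> x = x"
    using antimono_fixpoint_between[OF assms(2,3) a(2) b(2)] by blast
  moreover from \<open>a \<le> x\<close> \<open>x \<le> b\<close> a(1) b(1) have "x \<in> cost_support cl cu"
    unfolding cost_support_def
    by (auto intro: order_trans[where y = "ereal a"] order_trans[where y = "ereal b"])
  ultimately show ?thesis
    using antimono_fixpoint_unique[OF assms(2)] by (intro ex1I[of _ x]) auto
qed

theorem lemma1:
  fixes n L K :: nat and mu q v va qa :: "nat \<Rightarrow> real"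
    and F f :: "real \<Rightarrow> real" and cl cu :: ereal
  defines "\<Psi> \<equiv> Psi n F L mu q v K va qa"
  assumes n: "1 \<le> n"
    and dist: "admissible_cost_dist cl cu F f"
    and mu: "\<forall>l<L. 0 < mu l \<and> mu l \<le> 1"
    and q: "\<forall>l<L. 0 < q l \<and> q l \<le> 1"
    and v: "\<forall>l<L. 0 \<le> v l"
    and va: "\<forall>k<K. 0 \<le> va k"
    and qa: "\<forall>k<K. 0 \<le> qa k \<and> qa k \<le> 1"
  shows
    "(\<forall>c. cl = ereal c \<and> \<Psi> c \<le> c \<longrightarrow> {ch. sym_eq_threshold cl cu \<Psi> ch} = {c})
     \<and> (\<forall>c. cu = ereal c \<and> c \<le> \<Psi> c \<longrightarrow> {ch. sym_eq_threshold cl cu \<Psi> ch} = {c})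
     \<and> ((\<not> (\<exists>c. cl = ereal c \<and> \<Psi> c \<le> c) \<and> \<not> (\<exists>c. cu = ereal c \<and> c \<le> \<Psi> c)) \<longrightarrow>
          (\<exists>!ch. ch \<in> cost_support cl cu \<and> ch = \<Psi> ch) \<and>
          (\<forall>ch. sym_eq_threshold cl cu \<Psi> ch \<longleftrightarrow> (ch \<in> cost_support cl cu \<and> ch = \<Psi> ch)))"
proof -
  have "cl < cu" "mono F" "continuous_on UNIV F" "(F \<longlongrightarrow> 0) at_bot" "(F \<longlongrightarrow> 1) at_top"
    using dist unfolding admissible_cost_dist_def by auto
  then have F_01: "0 \<le> F c \<and> F c \<le> 1" for c by (intro mono_bounded_by_limits)
  have organic: "0 \<le> v l * mu l \<and> 0 \<le> q l \<and> q l \<le> 1" if "l < L" for l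
    using that mu q v by auto
  have artificial: "0 \<le> va k \<and> 0 \<le> qa k \<and> qa k \<le> 1" if "k < K" for k
    using that va qa by auto
  have antimono: "antimono \<Psi>"
    unfolding \<Psi>_def using n \<open>mono F\<close> F_01 organic artificial by (rule antimono_Psi)
  have continuous: "continuous_on UNIV \<Psi>"
    unfolding \<Psi>_def using \<open>continuous_on UNIV F\<close> by (rule continuous_on_Psi)
  have bounded: "\<bar>\<Psi> c\<bar> \<le> (\<Sum>l<L. v l * mu l) + (\<Sum>k<K. va k)" for c
    unfolding \<Psi>_def using n F_01 organic artificial by (intro abs_Psi_le) auto
  show ?thesis
    using sym_eq_threshold_lower_corner[OF \<open>cl < cu\<close> antimono]
      sym_eq_threshold_upper_corner[OF \<open>cl < cu\<close> antimono]
      ex1_fixpoint_in_support[OF \<open>cl < cu\<close> antimono continuous bounded]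
      sym_eq_threshold_iff_fixpoint
    by blast
qed

end
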